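(* Let $(\mathcal{A},\varphi)$ be a non-commutative probability space (a unital $*$-algebra with a state $\varphi$) and let $(\mathcal{A}_{1,\ell},\mathcal{A}_{1,r})$ and $(\mathcal{A}_{2,\ell},\mathcal{A}_{2,r})$ be pairs of $*$-subalgebras of $\mathcal{A}$ which are bi-monotonically independent (in the order $1<2$) with respect to $\varphi$. If $\varphi|_{\mathcal{A}_{1,\ell}}\ne0$, then $\varphi(ab)=\varphi(ba)=\varphi(a)\varphi(b)$ for all $a\in\mathcal{A}_{2,\ell}$ and $b\in\mathcal{A}_{2,r}$. Consequently the bi-monotonic product of states is not a state in general.
   Context: For algebras $\mathcal{C}_k$, $\sqcup_k\mathcal{C}_k$ denotes the free product without identification of units, $*_k\mathcal{C}_k$ the free product of unital algebras with identification of units, and $\widetilde{\mathcal{C}}=\mathbb{C}1\oplus\mathcal{C}$ the unitization; $\widetilde{\mathcal{C}_1}*\widetilde{\mathcal{C}_2}\cong\widetilde{\mathcal{C}_1\sqcup\mathcal{C}_2}$. Notation. For $n\ge1$ and $\chi:\{1,\dots,n\}\to\{\ell,r\}$ with $\chi^{-1}(\{\ell\})=\{i_1<\dots<i_p\}$ and $\chi^{-1}(\{r\})=\{i_{p+1}>\dots>i_n\}$, let $\prec_\chi$ be the total order $i_1\prec_\chi\cdots\prec_\chi i_n$. A $\chi$-interval is an interval for $\prec_\chi$. For $V=\{v_1<\dots<v_s\}$ write $b_V=b_{v_1}\cdots b_{v_s}$. For $\omega:\{1,\dots,n\}\to K$, $\pi_{\chi,\omega}$ is the unique partition of $\{1,\dots,n\}$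 into blocks $V_1,\dots,V_m$ such that each $V_k$ is a $\chi$-interval, $\max_{\prec_\chi}V_k\prec_\chi\min_{\prec_\chi}V_{k+1}$, $\omega$ is constant on each $V_k$, and $\omega(V_k)\ne\omega(V_{k+1})$. c-bi-free product. Given pairs of unital algebras $(\mathcal{B}_{k,\ell},\mathcal{B}_{k,r})_{k\in K}$ and unital linear functionals $\varphi_k,\psi_k$ on $\mathcal{B}_{k,\ell}*\mathcal{B}_{k,r}$, their c-bi-free product $(\varphi,\psi)$ is the unique pair of unital linear functionals on $*_k(\mathcal{B}_{k,\ell}*\mathcal{B}_{k,r})$ restricting to $\varphi_k,\psi_k$ and such that whenever $b_j\in\mathcal{B}_{\omega(j),\chi(j)}$ with $\psi(b_V)=0$ for all $V\in\pi_{\chi,\omega}$, then $\psi(b_1\cdots b_n)=0$ and $\varphi(b_1\cdots b_n)=\prod_{V\in\pi_{\chi,\omega}}\varphi(b_V)$. Bi-monotonic product. For pairs $(\mathcal{A}_{k,\ell},\mathcal{A}_{k,r})$, $k=1,2$, with linear functionals $\varphi_k$ on $\mathcal{A}_{k,\ell}\sqcup\mathcal{A}_{k,r}$: let $\widetilde{\varphi_k}$ be the unital extension to $\widetilde{\mathcal{A}_{k,\ell}\sqcup\mathcal{A}_{k,r}}$, $\delta_1$ the unital functional on $\widetilde{\mathcal{A}_{1,\ell}\sqcup\mathcal{A}_{1,r}}$ vanishing on $\mathcal{A}_{1,\ell}\sqcup\mathcal{A}_{1,r}$, and $(\widetilde\varphi,\widetilde\psi)$ the c-bi-free product of $(\widetilde{\varphi_1},\delta_1)$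 and $(\widetilde{\varphi_2},\widetilde{\varphi_2})$ for the pairs $(\widetilde{\mathcal{A}_{k,\ell}},\widetilde{\mathcal{A}_{k,r}})$. Then $\varphi_1\rhd\!\!\rhd\varphi_2$ is the restriction of $\widetilde\varphi$ to $(\mathcal{A}_{1,\ell}\sqcup\mathcal{A}_{1,r})\sqcup(\mathcal{A}_{2,\ell}\sqcup\mathcal{A}_{2,r})$. Bi-monotonic independence of two pairs of subalgebras of $(\mathcal{A},\varphi)$ (in the order $1<2$) means $\varphi\circ\iota=\varphi_1\rhd\!\!\rhd\varphi_2$, where $\iota:(\mathcal{A}_{1,\ell}\sqcup\mathcal{A}_{1,r})\sqcup(\mathcal{A}_{2,\ell}\sqcup\mathcal{A}_{2,r})\to\mathcal{A}$ is induced by the inclusions and $\varphi_k=\varphi\circ\iota|_{\mathcal{A}_{k,\ell}\sqcup\mathcal{A}_{k,r}}$. *)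

theory Defs
  imports Complex_Main
begin

definition star_algebra :: "(complex \<Rightarrow> 'a::ring_1 \<Rightarrow> 'a) \<Rightarrow> ('a \<Rightarrow> 'a) \<Rightarrow> bool" where
  "star_algebra sc st \<longleftrightarrow>
     (\<forall>a x y. sc a (x + y) = sc a x + sc a y) \<and>
     (\<forall>a b x. sc (a + b) x = sc a x + sc b x) \<and>
     (\<forall>a b x. sc a (sc b x) = sc (a * b) x) \<and>
     (\<forall>x. sc 1 x = x) \<and>
     (\<forall>a x y. sc a (x * y) = sc a x * y \<and> sc a (x * y) = x * sc a y) \<and>
     (\<forall>x y. st (x + y) = st x + st y) \<and>
     (\<forall>a x. st (sc a x) = sc (cnj a) (st x)) \<and>
     (\<forall>x y. st (x * y) = st y * st x) \<and>
     (\<forall>x. st (st x) = x)"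

definition is_state :: "(complex \<Rightarrow> 'a::ring_1 \<Rightarrow> 'a) \<Rightarrow> ('a \<Rightarrow> 'a) \<Rightarrow> ('a \<Rightarrow> complex) \<Rightarrow> bool" where
  "is_state sc st \<phi> \<longleftrightarrow>
     (\<forall>x y. \<phi> (x + y) = \<phi> x + \<phi> y) \<and>
     (\<forall>a x. \<phi> (sc a x) = a * \<phi> x) \<and>
     \<phi> 1 = 1 \<and>
     (\<forall>x. Im (\<phi> (st x * x)) = 0 \<and> Re (\<phi> (st x * x)) \<ge> 0)"

text \<open>(Not necessarily unital) *-subalgebra.\<close>
definition star_subalgebra :: "(complex \<Rightarrow> 'a::ring_1 \<Rightarrow> 'a) \<Rightarrow> ('a \<Rightarrow> 'a) \<Rightarrow> 'a set \<Rightarrow> bool" where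
  "star_subalgebra sc st S \<longleftrightarrow>
     0 \<in> S \<and>
     (\<forall>x\<in>S. \<forall>y\<in>S. x + y \<in> S \<and> x * y \<in> S) \<and>
     (\<forall>a. \<forall>x\<in>S. sc a x \<in> S) \<and>
     (\<forall>x\<in>S. st x \<in> S)"

datatype side = Lft | Rgt

text \<open>A letter (k, s, c, x) stands for the element c 1 + x of the unitization of the
algebra A k s, where k \<in> {1,2} and s is the side (left/right).  A linear functional on the
unital free product *_(k,s) (unitization of A k s) is the same thing as a function F on words
(lists of letters) that is linear in each letter, compatible with multiplication of adjacent
letters from the same algebra, and under which unit letters may be deleted.\<close>

type_synonym 'a letter = "nat \<times> side \<times> complex \<times> 'a"

definition valid_letter :: "(nat \<Rightarrow> side \<Rightarrow> 'a set) \<Rightarrow> 'a letter \<Rightarrow> bool" where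
  "valid_letter A l \<longleftrightarrow> (case l of (k, s, c, x) \<Rightarrow> k \<in> {1, 2} \<and> x \<in> A k s)"

definition valid_word :: "(nat \<Rightarrow> side \<Rightarrow> 'a set) \<Rightarrow> 'a letter list \<Rightarrow> bool" where
  "valid_word A w \<longleftrightarrow> (\<forall>l\<in>set w. valid_letter A l)"

definition pure_word :: "'a letter list \<Rightarrow> bool" where
  "pure_word w \<longleftrightarrow> (\<forall>l\<in>set w. fst (snd (snd l)) = 0)"

definition word_prod :: "'a::ring_1 letter list \<Rightarrow> 'a" where
  "word_prod w = prod_list (map (\<lambda>l. snd (snd (snd l))) w)"

definition free_prod_functional ::
  "(complex \<Rightarrow> 'a::ring_1 \<Rightarrow> 'a) \<Rightarrow> (nat \<Rightarrow> side \<Rightarrow> 'a set) \<Rightarrow> ('a letter list \<Rightarrow> complex) \<Rightarrow> bool" where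
  "free_prod_functional sc A F \<longleftrightarrow>
     (\<forall>u v k s c1 x1 c2 x2 d.
        valid_word A u \<and> valid_word A v \<and> valid_letter A (k, s, c1, x1) \<and> valid_letter A (k, s, c2, x2) \<longrightarrow>
        F (u @ [(k, s, c1 + d * c2, x1 + sc d x2)] @ v)
          = F (u @ [(k, s, c1, x1)] @ v) + d * F (u @ [(k, s, c2, x2)] @ v)) \<and>
     (\<forall>u v k s c x d y.
        valid_word A u \<and> valid_word A v \<and> valid_letter A (k, s, c, x) \<and> valid_letter A (k, s, d, y) \<longrightarrow>
        F (u @ [(k, s, c, x), (k, s, d, y)] @ v)
          = F (u @ [(k, s, c * d, sc c y + sc d x + x * y)] @ v)) \<and>
     (\<forall>u v k s.
        valid_word A u \<and> valid_word A v \<and> k \<in> {1, 2} \<longrightarrow>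
        F (u @ [(k, s, 1, 0)] @ v) = F (u @ v))"

text \<open>Positions of a word of length n are 0,...,n-1. chi_order w lists the positions in the
order \<prec>_\<chi>: left positions increasingly, then right positions decreasingly.\<close>

definition chi_order :: "'a letter list \<Rightarrow> nat list" where
  "chi_order w = [i \<leftarrow> [0..<length w]. fst (snd (w ! i)) = Lft]
                 @ rev [i \<leftarrow> [0..<length w]. fst (snd (w ! i)) = Rgt]"

text \<open>\<pi>_{\<chi>,\<omega>}: the maximal \<chi>-intervals on which \<omega> (the algebra index k) is constant.\<close>
definition pi_chi_omega :: "'a letter list \<Rightarrow> nat set set" where
  "pi_chi_omega w =
     (let n = length w; ord = chi_order w; om = (\<lambda>t. fst (w ! (ord ! t))) in
      {V. \<exists>a b. a \<le> b \<and> b < n \<and> V = (\<lambda>t. ord ! t) ` {a..b} \<and>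
              (\<forall>t\<in>{a..b}. om t = om a) \<and>
              (a = 0 \<or> om (a - 1) \<noteq> om a) \<and>
              (b = n - 1 \<or> om (b + 1) \<noteq> om a)})"

text \<open>The c-bi-free product (\<Phi>,\<Psi>) of (\<phi>_1~, \<delta>_1) and (\<phi>_2~, \<phi>_2~), where \<phi>_k is the
restriction of \<phi> \<circ> \<iota> to the free product of A k Lft and A k Rgt and ~ denotes unital
extension to the unitization.  Restrictions are stated on pure words (which, together with
linearity and unit deletion, determine the functionals on the unitized free products).\<close>

definition bimonotone_cbifree_pair ::
  "(complex \<Rightarrow> 'a::ring_1 \<Rightarrow> 'a) \<Rightarrow> ('a \<Rightarrow> complex) \<Rightarrow> (nat \<Rightarrow> side \<Rightarrow> 'a set)
   \<Rightarrow> ('a letter list \<Rightarrow> complex) \<Rightarrow> ('a letter list \<Rightarrow> complex) \<Rightarrow> bool" where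
  "bimonotone_cbifree_pair sc \<phi> A \<Phi> \<Psi> \<longleftrightarrow>
     free_prod_functional sc A \<Phi> \<and> free_prod_functional sc A \<Psi> \<and>
     \<Phi> [] = 1 \<and> \<Psi> [] = 1 \<and>
     \<comment> \<open>restriction of \<Phi> to the k-th unitized pair is \<phi>_k~\<close>
     (\<forall>k\<in>{1, 2}. \<forall>w. valid_word A w \<and> pure_word w \<and> w \<noteq> [] \<and> (\<forall>l\<in>set w. fst l = k)
         \<longrightarrow> \<Phi> w = \<phi> (word_prod w)) \<and>
     \<comment> \<open>restriction of \<Psi> to the first unitized pair is \<delta>_1\<close>
     (\<forall>w. valid_word A w \<and> pure_word w \<and> w \<noteq> [] \<and> (\<forall>l\<in>set w. fst l = 1)
         \<longrightarrow> \<Psi> w = 0) \<and>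
     \<comment> \<open>restriction of \<Psi> to the second unitized pair is \<phi>_2~\<close>
     (\<forall>w. valid_word A w \<and> pure_word w \<and> w \<noteq> [] \<and> (\<forall>l\<in>set w. fst l = 2)
         \<longrightarrow> \<Psi> w = \<phi> (word_prod w)) \<and>
     \<comment> \<open>c-bi-free condition\<close>
     (\<forall>w. valid_word A w \<and> w \<noteq> [] \<and> (\<forall>V\<in>pi_chi_omega w. \<Psi> (nths w V) = 0)
         \<longrightarrow> \<Psi> w = 0 \<and> \<Phi> w = (\<Prod>V\<in>pi_chi_omega w. \<Phi> (nths w V)))"

text \<open>Bi-monotonic independence of (A 1 Lft, A 1 Rgt) and (A 2 Lft, A 2 Rgt) (order 1 < 2):
\<phi> \<circ> \<iota> equals the bi-monotonic product, i.e. the restriction of \<Phi> to the non-unital free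
product, which is spanned by the pure words.\<close>

definition bimonotone_independent ::
  "(complex \<Rightarrow> 'a::ring_1 \<Rightarrow> 'a) \<Rightarrow> ('a \<Rightarrow> complex) \<Rightarrow> (nat \<Rightarrow> side \<Rightarrow> 'a set) \<Rightarrow> bool" where
  "bimonotone_independent sc \<phi> A \<longleftrightarrow>
     (\<exists>\<Phi> \<Psi>. bimonotone_cbifree_pair sc \<phi> A \<Phi> \<Psi> \<and>
        (\<forall>w. valid_word A w \<and> pure_word w \<and> w \<noteq> [] \<longrightarrow> \<phi> (word_prod w) = \<Phi> w))"

end

theory Submission
  imports Defs
begin

text \<open>
  In the c-bi-free product \<open>(\<Phi>, \<Psi>)\<close> defining the bi-monotonic product, \<open>\<Psi>\<close> vanishes on the
  first pair and agrees with \<open>\<phi>\<close> on the second.  Hence every word whose letters are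
  \<open>x \<in> A\<^sub>1\<^sub>\<ell>\<close> and centred elements \<open>a - \<phi>(a)\<close>, \<open>b - \<phi>(b)\<close> of the second pair, alternating
  in the \<open>\<chi>\<close>-order, is annihilated by \<open>\<Phi>\<close>; expanding gives \<open>\<phi>(b a x) = \<phi>(b) \<phi>(a) \<phi>(x)\<close>.
  Shifting \<open>a\<close> and \<open>b\<close> by scalars so that \<open>\<Phi>\<close> and \<open>\<Psi>\<close> vanish on their product and using
  the block \<open>{a, b}\<close> instead gives \<open>\<phi>(x a b) = \<phi>(x) \<phi>(a b)\<close>.  Applied to \<open>x\<^sup>*\<close>, the two
  identities are adjoint to each other, because a state satisfies \<open>\<phi>(y\<^sup>*) = \<phi>(y)\<^sup>*\<close>; this yields
  \<open>\<phi>(x) \<phi>(a b)\<^sup>* = \<phi>(x) (\<phi>(a) \<phi>(b))\<^sup>*\<close>, and \<open>\<phi>(x) \<noteq> 0\<close> can be cancelled.  The identity for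
  \<open>b a\<close> follows by taking adjoints once more.
\<close>

lemma nths_singleton_index: "i < length xs \<Longrightarrow> nths xs {i} = [xs ! i]"
proof (induction xs arbitrary: i)
  case (Cons x xs)
  then show ?case by (cases i) (auto simp: nths_Cons)
qed simp

lemma length_chi_order: "length (chi_order w) = length w"
proof -
  have "\<And>s::side. (s = Rgt) = (s \<noteq> Lft)" by (metis side.exhaust side.distinct(1))
  then show ?thesis by (simp add: chi_order_def sum_length_filter_compl)
qed

lemma set_chi_order: "set (chi_order w) = {..<length w}"
  using side.exhaust by (auto simp: chi_order_def)

definition chi_alternating :: "'a letter list \<Rightarrow> bool" where
  "chi_alternating w \<longleftrightarrow>
     (\<forall>t. Suc t < length w \<longrightarrow> fst (w ! (chi_order w ! t)) \<noteq> fst (w ! (chi_order w ! Suc t)))"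

lemma pi_chi_omega_alternating:
  assumes "chi_alternating w"
  shows "pi_chi_omega w = (\<lambda>t. {chi_order w ! t}) ` {..<length w}"
proof -
  let ?n = "length w"
  let ?o = "chi_order w"
  let ?om = "\<lambda>t. fst (w ! (?o ! t))"
  have step: "\<And>t. Suc t < ?n \<Longrightarrow> ?om t \<noteq> ?om (Suc t)"
    using assms by (simp add: chi_alternating_def)
  show ?thesis
  proof (rule set_eqI, rule iffI)
    fix V assume "V \<in> pi_chi_omega w"
    then obtain a b where ab: "a \<le> b" "b < ?n" "V = (\<lambda>t. ?o ! t) ` {a..b}"
      and const: "\<forall>t\<in>{a..b}. ?om t = ?om a"
      unfolding pi_chi_omega_def Let_def by blast
    have "a = b"
    proof (rule ccontr)
      assume "a \<noteq> b"
      then have "Suc a \<in> {a..b}" "Suc a < ?n" using ab by auto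
      then show False using const step[of a] by metis
    qed
    then show "V \<in> (\<lambda>t. {?o ! t}) ` {..<?n}" using ab by auto
  next
    fix V assume "V \<in> (\<lambda>t. {?o ! t}) ` {..<?n}"
    then obtain t where t: "t < ?n" "V = {?o ! t}" by auto
    have "t = 0 \<or> ?om (t - 1) \<noteq> ?om t"
      using step[of "t - 1"] t by (cases t) auto
    moreover have "t = ?n - 1 \<or> ?om (t + 1) \<noteq> ?om t"
      using step[of t] t by (cases "Suc t < ?n") auto
    ultimately show "V \<in> pi_chi_omega w"
      unfolding pi_chi_omega_def Let_def using t by (auto intro!: exI[of _ t])
  qed
qed

lemma ex_interval_below_3:
  "(\<exists>a b::nat. a \<le> b \<and> b < 3 \<and> P a b) \<longleftrightarrow> P 0 0 \<or> P 0 1 \<or> P 0 2 \<or> P 1 1 \<or> P 1 2 \<or> P 2 2"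
proof
  assume "\<exists>a b::nat. a \<le> b \<and> b < 3 \<and> P a b"
  then obtain a b :: nat where "a \<le> b" "b < 3" "P a b" by blast
  then show "P 0 0 \<or> P 0 1 \<or> P 0 2 \<or> P 1 1 \<or> P 1 2 \<or> P 2 2"
    by (cases a; cases b) (auto simp: numeral_3_eq_3 numeral_2_eq_2 less_Suc_eq le_Suc_eq)
next
  assume "P 0 0 \<or> P 0 1 \<or> P 0 2 \<or> P 1 1 \<or> P 1 2 \<or> P 2 2"
  then show "\<exists>a b::nat. a \<le> b \<and> b < 3 \<and> P a b"
    by (elim disjE) (intro exI conjI[rotated], assumption, simp, simp)+
qed

lemma pi_chi_omega_left_left_right:
  assumes "fst p \<noteq> fst q" "fst q = fst r"
    and "fst (snd p) = Lft" "fst (snd q) = Lft" "fst (snd r) = Rgt"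
  shows "pi_chi_omega [p, q, r] = {{0}, {1, 2}}"
proof -
  have order: "chi_order [p, q, r] = [0, 1, 2]" using assms by (simp add: chi_order_def upt_rec)
  have len: "length [p, q, r] = 3" by simp
  have "pi_chi_omega [p, q, r] = {V. V = {0} \<or> V = {1, 2}}"
    unfolding pi_chi_omega_def Let_def order len ex_interval_below_3
    using assms by (simp add: numeral_2_eq_2 atLeastAtMostSuc_conv insert_commute)
  then show ?thesis by auto
qed

lemma free_prod_functional_unit_split:
  assumes F: "free_prod_functional sc A F" and sc_zero: "\<And>c. sc c 0 = 0"
    and k: "k \<in> {1, 2}" and "0 \<in> A k s" "y \<in> A k s" and uv: "valid_word A u" "valid_word A v"
  shows "F (u @ (k, s, c, y) # v) = F (u @ (k, s, 0, y) # v) + c * F (u @ v)"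
proof -
  have "valid_letter A (k, s, 0, y)" "valid_letter A (k, s, 1, 0)"
    using assms(3-5) by (simp_all add: valid_letter_def)
  then have "F (u @ [(k, s, 0 + c * 1, y + sc c 0)] @ v)
      = F (u @ [(k, s, 0, y)] @ v) + c * F (u @ [(k, s, 1, 0)] @ v)"
    using F[unfolded free_prod_functional_def, THEN conjunct1, rule_format, of u v k s 0 y 1 0 c] uv
    by blast
  moreover have "F (u @ [(k, s, 1, 0)] @ v) = F (u @ v)"
    using F[unfolded free_prod_functional_def, THEN conjunct2, THEN conjunct2, rule_format, of u v k s] k uv
    by blast
  ultimately show ?thesis by (simp add: sc_zero)
qed

lemma chi_alternating_two_letters:
  assumes "fst p \<noteq> fst q"
  shows "chi_alternating [p, q]"
  using assms
  by (cases "fst (snd p)"; cases "fst (snd q)") (simp_all add: chi_alternating_def chi_order_def upt_rec)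

lemma star_algebra_scale_zero: "star_algebra sc st \<Longrightarrow> sc c 0 = 0"
  unfolding star_algebra_def by (metis add_cancel_right_right)

lemma star_algebra_star_mult: "star_algebra sc st \<Longrightarrow> st (x * y) = st y * st x"
  and star_algebra_star_star: "star_algebra sc st \<Longrightarrow> st (st x) = x"
  unfolding star_algebra_def by blast+

lemma state_star:
  assumes sa: "star_algebra sc st" and state: "is_state sc st \<phi>"
  shows "\<phi> (st z) = cnj (\<phi> z)"
proof -
  have add: "\<And>x y. \<phi> (x + y) = \<phi> x + \<phi> y" and smult: "\<And>c x. \<phi> (sc c x) = c * \<phi> x"
    and one: "\<phi> 1 = 1" and real: "\<And>x. Im (\<phi> (st x * x)) = 0"
    using state unfolding is_state_def by blast+
  have st_add: "\<And>x y. st (x + y) = st x + st y" and st_sc: "\<And>c x. st (sc c x) = sc (cnj c) (st x)"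
    and sc_sc: "\<And>c d x. sc c (sc d x) = sc (c * d) x" and sc_one: "\<And>x. sc 1 x = x"
    and sc_mult: "\<And>c x y. sc c (x * y) = sc c x * y \<and> sc c (x * y) = x * sc c y"
    using sa unfolding star_algebra_def by blast+
  have st_one: "st 1 = 1"
    using star_algebra_star_mult[OF sa, of "st 1" 1] star_algebra_star_star[OF sa] by simp
  \<comment> \<open>polarisation: \<open>\<phi>\<close> is real on \<open>(1 + z)\<^sup>* (1 + z)\<close> and on \<open>(1 + i z)\<^sup>* (1 + i z)\<close>\<close>
  have "st (1 + z) * (1 + z) = 1 + z + st z + st z * z"
    by (simp add: st_add st_one algebra_simps)
  then have im: "Im (\<phi> z) + Im (\<phi> (st z)) = 0"
    using real[of "1 + z"] real[of z] by (simp add: add one)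
  have "sc (- \<i>) (st z) * sc \<i> z = sc (- \<i>) (sc \<i> (st z * z))"
    by (metis sc_mult)
  then have "sc (- \<i>) (st z) * sc \<i> z = st z * z"
    by (simp add: sc_sc sc_one)
  then have "st (1 + sc \<i> z) * (1 + sc \<i> z) = 1 + sc \<i> z + sc (- \<i>) (st z) + st z * z"
    by (simp add: st_add st_one st_sc algebra_simps)
  then have re: "Re (\<phi> z) - Re (\<phi> (st z)) = 0"
    using real[of "1 + sc \<i> z"] real[of z] by (simp add: add one smult)
  show ?thesis using im re by (simp add: complex_eq_iff)
qed

locale bimonotone_product =
  fixes sc :: "complex \<Rightarrow> 'a::ring_1 \<Rightarrow> 'a"
    and \<phi> :: "'a \<Rightarrow> complex"
    and A :: "nat \<Rightarrow> side \<Rightarrow> 'a set"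
    and \<Phi> \<Psi> :: "'a letter list \<Rightarrow> complex"
  assumes cbifree: "bimonotone_cbifree_pair sc \<phi> A \<Phi> \<Psi>"
    and Phi_pure: "\<And>w. valid_word A w \<Longrightarrow> pure_word w \<Longrightarrow> w \<noteq> [] \<Longrightarrow> \<Phi> w = \<phi> (word_prod w)"
    and sc_zero: "\<And>c. sc c 0 = 0"
    and zero_mem: "\<And>k s. k \<in> {1, 2} \<Longrightarrow> 0 \<in> A k s"
begin

lemma free_prod_functional_Phi: "free_prod_functional sc A \<Phi>"
  and free_prod_functional_Psi: "free_prod_functional sc A \<Psi>"
  and Phi_Nil: "\<Phi> [] = 1" and Psi_Nil: "\<Psi> [] = 1"
  using cbifree unfolding bimonotone_cbifree_pair_def by blast+

lemma Psi_pure_first: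
  "\<lbrakk>valid_word A w; pure_word w; w \<noteq> []; \<forall>l\<in>set w. fst l = 1\<rbrakk> \<Longrightarrow> \<Psi> w = 0"
  using cbifree unfolding bimonotone_cbifree_pair_def by blast

lemma Psi_pure_second:
  "\<lbrakk>valid_word A w; pure_word w; w \<noteq> []; \<forall>l\<in>set w. fst l = 2\<rbrakk> \<Longrightarrow> \<Psi> w = \<phi> (word_prod w)"
  using cbifree unfolding bimonotone_cbifree_pair_def by blast

lemma Phi_cbifree_product:
  "\<lbrakk>valid_word A w; w \<noteq> []; \<forall>V\<in>pi_chi_omega w. \<Psi> (nths w V) = 0\<rbrakk>
   \<Longrightarrow> \<Phi> w = (\<Prod>V\<in>pi_chi_omega w. \<Phi> (nths w V))"
  using cbifree unfolding bimonotone_cbifree_pair_def by blast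

lemma Phi_unit_split:
  assumes "k \<in> {1, 2}" "y \<in> A k s" "valid_word A u" "valid_word A v"
  shows "\<Phi> (u @ (k, s, c, y) # v) = \<Phi> (u @ (k, s, 0, y) # v) + c * \<Phi> (u @ v)"
  using free_prod_functional_unit_split[OF free_prod_functional_Phi sc_zero] zero_mem assms by blast

lemma Psi_unit_split:
  assumes "k \<in> {1, 2}" "y \<in> A k s" "valid_word A u" "valid_word A v"
  shows "\<Psi> (u @ (k, s, c, y) # v) = \<Psi> (u @ (k, s, 0, y) # v) + c * \<Psi> (u @ v)"
  using free_prod_functional_unit_split[OF free_prod_functional_Psi sc_zero] zero_mem assms by blast

lemma Phi_alternating_eq_zero:
  assumes w: "valid_word A w" "chi_alternating w"
    and Psi_letters: "\<forall>l\<in>set w. \<Psi> [l] = 0"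
    and centered: "l \<in> set w" "\<Phi> [l] = 0"
  shows "\<Phi> w = 0"
proof -
  have positions: "(!) (chi_order w) ` {..<length w} = {..<length w}"
    using nth_image[of "length w" "chi_order w"]
    by (simp add: length_chi_order set_chi_order atLeast0LessThan)
  have "pi_chi_omega w = (\<lambda>i. {i}) ` ((!) (chi_order w) ` {..<length w})"
    unfolding pi_chi_omega_alternating[OF w(2)] image_image ..
  then have blocks: "pi_chi_omega w = (\<lambda>i. {i}) ` {..<length w}"
    unfolding positions .
  have "\<Phi> w = (\<Prod>V\<in>pi_chi_omega w. \<Phi> (nths w V))"
    using centered(1) Psi_letters
    by (intro Phi_cbifree_product w(1)) (auto simp: blocks nths_singleton_index)
  also have "\<dots> = (\<Prod>i<length w. \<Phi> [w ! i])"
    by (simp add: blocks prod.reindex nths_singleton_index)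
  also have "\<dots> = 0"
    using centered by (auto simp: in_set_conv_nth)
  finally show ?thesis .
qed

lemma Phi_letter: "\<lbrakk>k \<in> {1, 2}; y \<in> A k s\<rbrakk> \<Longrightarrow> \<Phi> [(k, s, 0, y)] = \<phi> y"
  by (simp add: Phi_pure valid_word_def valid_letter_def pure_word_def word_prod_def)

lemma Psi_letter_first: "y \<in> A 1 s \<Longrightarrow> \<Psi> [(1, s, 0, y)] = 0"
  by (simp add: Psi_pure_first valid_word_def valid_letter_def pure_word_def)

lemma Psi_letter_second: "y \<in> A 2 s \<Longrightarrow> \<Psi> [(2, s, 0, y)] = \<phi> y"
  by (simp add: Psi_pure_second valid_word_def valid_letter_def pure_word_def word_prod_def)

lemma centered_letter_second:
  assumes "y \<in> A 2 s"
  shows "\<Phi> [(2, s, - \<phi> y, y)] = 0" and "\<Psi> [(2, s, - \<phi> y, y)] = 0"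
  using Phi_unit_split[of 2 y s "[]" "[]" "- \<phi> y"] Psi_unit_split[of 2 y s "[]" "[]" "- \<phi> y"]
  by (simp_all add: assms valid_word_def Phi_letter Psi_letter_second Phi_Nil Psi_Nil)

lemma phi_mult_second_first:
  assumes y: "y \<in> A 2 s" and x: "x \<in> A 1 s'"
  shows "\<phi> (y * x) = \<phi> y * \<phi> x"
proof -
  let ?Y = "(2, s, 0, y)" and ?Yc = "(2, s, - \<phi> y, y)" and ?X = "(1, s', 0, x)"
  have valid: "valid_word A [?Yc, ?X]" "valid_word A [?X]"
    using x y by (simp_all add: valid_word_def valid_letter_def)
  have "\<Phi> [?Yc, ?X] = 0"
    using Psi_letter_first[OF x] centered_letter_second[OF y]
    by (intro Phi_alternating_eq_zero[OF valid(1) chi_alternating_two_letters, of ?Yc]) simp_all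
  moreover have "\<Phi> [?Yc, ?X] = \<Phi> [?Y, ?X] - \<phi> y * \<Phi> [?X]"
    using Phi_unit_split[of 2 y s "[]" "[?X]" "- \<phi> y"] valid y by (simp add: valid_word_def)
  moreover have "\<Phi> [?Y, ?X] = \<phi> (y * x)"
    using x y by (simp add: Phi_pure valid_word_def valid_letter_def pure_word_def word_prod_def)
  ultimately show ?thesis
    using x Phi_letter[of 1 x s'] by simp
qed

lemma phi_mult_first_second:
  assumes x: "x \<in> A 1 s'" and y: "y \<in> A 2 s"
  shows "\<phi> (x * y) = \<phi> x * \<phi> y"
proof -
  let ?Y = "(2, s, 0, y)" and ?Yc = "(2, s, - \<phi> y, y)" and ?X = "(1, s', 0, x)"
  have valid: "valid_word A [?X, ?Yc]" "valid_word A [?X]"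
    using x y by (simp_all add: valid_word_def valid_letter_def)
  have "\<Phi> [?X, ?Yc] = 0"
    using Psi_letter_first[OF x] centered_letter_second[OF y]
    by (intro Phi_alternating_eq_zero[OF valid(1) chi_alternating_two_letters, of ?Yc]) simp_all
  moreover have "\<Phi> [?X, ?Yc] = \<Phi> [?X, ?Y] - \<phi> y * \<Phi> [?X]"
    using Phi_unit_split[of 2 y s "[?X]" "[]" "- \<phi> y"] valid y by (simp add: valid_word_def)
  moreover have "\<Phi> [?X, ?Y] = \<phi> (x * y)"
    using x y by (simp add: Phi_pure valid_word_def valid_letter_def pure_word_def word_prod_def)
  ultimately show ?thesis
    using x Phi_letter[of 1 x s'] by (simp add: mult.commute)
qed

lemma phi_right_left_first:
  assumes a: "a \<in> A 2 Lft" and b: "b \<in> A 2 Rgt" and x: "x \<in> A 1 Lft"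
  shows "\<phi> (b * (a * x)) = \<phi> b * \<phi> a * \<phi> x"
proof -
  let ?X = "(1, Lft, 0, x)" and ?A = "(2, Lft, 0, a)" and ?B = "(2, Rgt, 0, b)"
  let ?Ac = "(2, Lft, - \<phi> a, a)" and ?Bc = "(2, Rgt, - \<phi> b, b)"
  have valid: "valid_word A [?X]" "valid_word A [?Ac, ?X]" "valid_word A [?B]"
    "valid_word A [?Bc, ?Ac, ?X]"
    using a b x by (simp_all add: valid_word_def valid_letter_def)
  have "chi_alternating [?Bc, ?Ac, ?X]"
    by (simp add: chi_alternating_def chi_order_def upt_rec nth_Cons')
  then have "\<Phi> [?Bc, ?Ac, ?X] = 0"
    using Psi_letter_first[OF x] centered_letter_second[OF a] centered_letter_second[OF b]
    by (intro Phi_alternating_eq_zero[OF valid(4), of ?Ac]) simp_all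
  moreover have "\<Phi> [?Ac, ?X] = 0"
    using Psi_letter_first[OF x] centered_letter_second[OF a]
    by (intro Phi_alternating_eq_zero[OF valid(2) chi_alternating_two_letters, of ?Ac]) simp_all
  moreover have "\<Phi> [?Bc, ?Ac, ?X] = \<Phi> [?B, ?Ac, ?X] - \<phi> b * \<Phi> [?Ac, ?X]"
    using Phi_unit_split[of 2 b Rgt "[]" "[?Ac, ?X]" "- \<phi> b"] valid b by (simp add: valid_word_def)
  moreover have "\<Phi> [?B, ?Ac, ?X] = \<Phi> [?B, ?A, ?X] - \<phi> a * \<Phi> [?B, ?X]"
    using Phi_unit_split[of 2 a Lft "[?B]" "[?X]" "- \<phi> a"] valid a by simp
  moreover have "\<Phi> [?B, ?X] = \<phi> b * \<phi> x"
    using phi_mult_second_first[OF b x] b x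
    by (simp add: Phi_pure valid_word_def valid_letter_def pure_word_def word_prod_def)
  moreover have "\<Phi> [?B, ?A, ?X] = \<phi> (b * (a * x))"
    using a b x by (simp add: Phi_pure valid_word_def valid_letter_def pure_word_def word_prod_def)
  ultimately show ?thesis by (simp add: algebra_simps)
qed

lemma phi_first_left_right:
  assumes x: "x \<in> A 1 Lft" and a: "a \<in> A 2 Lft" and b: "b \<in> A 2 Rgt"
  shows "\<phi> (x * (a * b)) = \<phi> x * \<phi> (a * b)"
proof -
  \<comment> \<open>\<open>c\<close> and \<open>d\<close> make both \<open>\<Phi>\<close> and \<open>\<Psi>\<close> vanish on \<open>(a + c) (b + d)\<close>, so the c-bi-free
     condition factorises \<open>x (a + c) (b + d)\<close> along the blocks \<open>{x}\<close>, \<open>{a + c, b + d}\<close>\<close>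
  define d where "d = 1 - \<phi> b"
  define c where "c = - (\<phi> (a * b) + d * \<phi> a)"
  let ?X = "(1, Lft, 0, x)" and ?A = "(2, Lft, 0, a)" and ?B = "(2, Rgt, 0, b)"
  let ?A' = "(2, Lft, c, a)" and ?B' = "(2, Rgt, d, b)"
  have valid: "valid_word A [?X]" "valid_word A [?A]" "valid_word A [?X, ?A]"
    using a b x by (simp_all add: valid_word_def valid_letter_def)
  have AB: "\<Phi> [?A, ?B] = \<phi> (a * b)" "\<Psi> [?A, ?B] = \<phi> (a * b)"
    using a b by (simp_all add: Phi_pure Psi_pure_second valid_word_def valid_letter_def
        pure_word_def word_prod_def)
  have Phi_A'B': "\<Phi> [?A', ?B'] = 0"
    using Phi_unit_split[of 2 a Lft "[]" "[?B']" c] Phi_unit_split[of 2 b Rgt "[?A]" "[]" d]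
      Phi_unit_split[of 2 b Rgt "[]" "[]" d] AB(1) Phi_letter[OF _ a] Phi_letter[OF _ b] Phi_Nil
    by (simp add: valid a b c_def d_def valid_word_def valid_letter_def algebra_simps)
  have Psi_A'B': "\<Psi> [?A', ?B'] = 0"
    using Psi_unit_split[of 2 a Lft "[]" "[?B']" c] Psi_unit_split[of 2 b Rgt "[?A]" "[]" d]
      Psi_unit_split[of 2 b Rgt "[]" "[]" d] AB(2) Psi_letter_second[OF a] Psi_letter_second[OF b] Psi_Nil
    by (simp add: valid a b c_def d_def valid_word_def valid_letter_def algebra_simps)
  have "pi_chi_omega [?X, ?A', ?B'] = {{0}, {1, 2}}"
    by (rule pi_chi_omega_left_left_right) simp_all
  then have "\<Phi> [?X, ?A', ?B'] = \<Phi> [?X] * \<Phi> [?A', ?B']"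
    using Phi_cbifree_product[of "[?X, ?A', ?B']"] Psi_letter_first[OF x] Psi_A'B' a b x
    by (simp add: nths_Cons valid_word_def valid_letter_def)
  then have "0 = \<Phi> [?X, ?A', ?B']"
    by (simp add: Phi_A'B')
  also have "\<dots> = \<Phi> [?X, ?A, ?B] + d * \<Phi> [?X, ?A] + c * (\<Phi> [?X, ?B] + d * \<Phi> [?X])"
    using Phi_unit_split[of 2 a Lft "[?X]" "[?B']" c] Phi_unit_split[of 2 b Rgt "[?X, ?A]" "[]" d]
      Phi_unit_split[of 2 b Rgt "[?X]" "[]" d] valid a b
    by (simp add: valid_word_def valid_letter_def)
  also have "\<dots> = \<phi> (x * (a * b)) - \<phi> x * \<phi> (a * b)"
    using phi_mult_first_second[OF x a] phi_mult_first_second[OF x b] a b x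
    by (simp add: Phi_pure valid_word_def valid_letter_def pure_word_def word_prod_def c_def d_def
        algebra_simps)
  finally show ?thesis by simp
qed

lemma phi_mult_left_right:
  assumes sa: "star_algebra sc st" and state: "is_state sc st \<phi>"
    and x: "x \<in> A 1 Lft" "st x \<in> A 1 Lft" "\<phi> x \<noteq> 0"
    and a: "a \<in> A 2 Lft" "st a \<in> A 2 Lft" and b: "b \<in> A 2 Rgt" "st b \<in> A 2 Rgt"
  shows "\<phi> (a * b) = \<phi> a * \<phi> b"
proof -
  note star = state_star[OF sa state]
  have "\<phi> x * cnj (\<phi> (a * b)) = cnj (\<phi> (st x) * \<phi> (a * b))"
    by (simp add: star)
  also have "\<dots> = cnj (\<phi> (st x * (a * b)))"
    by (simp add: phi_first_left_right[OF x(2) a(1) b(1)])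
  also have "\<dots> = \<phi> (st b * (st a * x))"
    by (simp add: star[symmetric] star_algebra_star_mult[OF sa] star_algebra_star_star[OF sa] mult.assoc)
  also have "\<dots> = \<phi> x * cnj (\<phi> a * \<phi> b)"
    by (simp add: phi_right_left_first[OF a(2) b(2) x(1)] star)
  finally have "cnj (\<phi> (a * b)) = cnj (\<phi> a * \<phi> b)"
    using x(3) by simp
  then show ?thesis by (simp only: complex_cnj_cancel_iff)
qed

end

theorem mainTheorem5:
  fixes sc :: "complex \<Rightarrow> 'a::ring_1 \<Rightarrow> 'a"
    and st :: "'a \<Rightarrow> 'a"
    and \<phi> :: "'a \<Rightarrow> complex"
    and A :: "nat \<Rightarrow> side \<Rightarrow> 'a set"
  assumes "star_algebra sc st"
    and "is_state sc st \<phi>"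
    and "\<And>k s. k \<in> {1, 2} \<Longrightarrow> star_subalgebra sc st (A k s)"
    and "bimonotone_independent sc \<phi> A"
    and "\<exists>x\<in>A 1 Lft. \<phi> x \<noteq> 0"
  shows "\<forall>a\<in>A 2 Lft. \<forall>b\<in>A 2 Rgt. \<phi> (a * b) = \<phi> a * \<phi> b \<and> \<phi> (b * a) = \<phi> a * \<phi> b"
proof -
  obtain \<Phi> \<Psi> where "bimonotone_cbifree_pair sc \<phi> A \<Phi> \<Psi>"
    and "\<forall>w. valid_word A w \<and> pure_word w \<and> w \<noteq> [] \<longrightarrow> \<phi> (word_prod w) = \<Phi> w"
    using assms(4) unfolding bimonotone_independent_def by blast
  moreover have "\<And>k s. k \<in> {1, 2} \<Longrightarrow> 0 \<in> A k s"
    and star_closed: "\<And>k s y. k \<in> {1, 2} \<Longrightarrow> y \<in> A k s \<Longrightarrow> st y \<in> A k s"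
    using assms(3) unfolding star_subalgebra_def by blast+
  ultimately interpret bimonotone_product sc \<phi> A \<Phi> \<Psi>
    using star_algebra_scale_zero[OF assms(1)] by unfold_locales auto
  obtain x where x: "x \<in> A 1 Lft" "\<phi> x \<noteq> 0" using assms(5) by blast
  have left_right: "\<phi> (a * b) = \<phi> a * \<phi> b" if "a \<in> A 2 Lft" "b \<in> A 2 Rgt" for a b
    using phi_mult_left_right[OF assms(1,2) x(1) star_closed[OF _ x(1)] x(2)
        that(1) star_closed[OF _ that(1)] that(2) star_closed[OF _ that(2)]] by simp
  show ?thesis
  proof (intro ballI conjI)
    fix a b assume a: "a \<in> A 2 Lft" and b: "b \<in> A 2 Rgt"
    show "\<phi> (a * b) = \<phi> a * \<phi> b" using left_right[OF a b] .
    have "\<phi> (b * a) = cnj (\<phi> (st a * st b))"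
      by (simp add: state_star[OF assms(1,2), symmetric] star_algebra_star_mult[OF assms(1)]
          star_algebra_star_star[OF assms(1)])
    also have "\<dots> = \<phi> a * \<phi> b"
      using left_right[OF star_closed[OF _ a] star_closed[OF _ b]] state_star[OF assms(1,2)] by simp
    finally show "\<phi> (b * a) = \<phi> a * \<phi> b" .
  qed
qed

end
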